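(* Let $d\ge1$, $\varepsilon>0$, and tensors $T^{(0)}\in\mathbb C$, $T^{(j)}\in(\mathbb{C}^n)^{\otimes 2j}$ ($j\in[d]$) with $\|T^{(j)}\|_F\le1$ for all $j$. For $j\in[d]$ and $i\in[2j]$ let $M_{j,i}\in\mathbb{C}^{n\times n^{2j-1}}$ be the flattening of $T^{(j)}$ whose row index is the $i$-th tensor index, let $W_{j,i}\subseteq\mathbb{C}^n$ be the span of the left singular vectors of $M_{j,i}$ with singular value at least $\varepsilon/(d+1)^2$, and let $W$ be the span of all $W_{j,i}$ and their entrywise complex conjugates $W_{j,i}^*$ ($j\in[d]$, $i\in[2j]$). Then $\dim W\le 8(d+1)^6/\varepsilon^2$, and for every $\vec y\in\mathbb{C}^n$ with $\|\vec y\|_2\le1$, \[ |f(\vec y)-f(\Pi_W\vec y)|\le\varepsilon, \] where $\Pi_W$ is the orthogonal projection onto $W$ and $f(\vec x)=T^{(0)}+\sum_{j=1}^d\langle T^{(j)},(\vec x^* )^{\otimes j}\otimes\vec x^{\otimes j}\rangle$.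
   Context: $\vec x^*$ is the entrywise complex conjugate. For tensors of the same shape, $\langle A,B\rangle=\sum_{\text{indices}}A_{i_1\dots i_k}B_{i_1\dots i_k}$ (bilinear, no conjugation). $\|\cdot\|_F$ is the Frobenius norm (square root of the sum of squared magnitudes of entries). *)

theory Defs
  imports "HOL-Analysis.Analysis" "HOL-Library.Function_Algebras"
begin

text \<open>Vectors in C^n are functions 'n => complex for a finite index type 'n (n = CARD('n)).
  Tensors in (C^n)^(tensor k) are functions 'n list => complex, only their values on lists
  of length k being relevant.\<close>

definition cscale :: "complex \<Rightarrow> ('n \<Rightarrow> complex) \<Rightarrow> ('n \<Rightarrow> complex)" where
  "cscale c v = (\<lambda>k. c * v k)"

definition cspan :: "('n \<Rightarrow> complex) set \<Rightarrow> ('n \<Rightarrow> complex) set" where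
  "cspan S = module.span cscale S"

definition cdim :: "('n \<Rightarrow> complex) set \<Rightarrow> nat" where
  "cdim S = vector_space.dim cscale S"

definition hinner :: "('n::finite \<Rightarrow> complex) \<Rightarrow> ('n \<Rightarrow> complex) \<Rightarrow> complex" where
  "hinner u v = (\<Sum>k\<in>UNIV. cnj (u k) * v k)"

definition vnorm2 :: "('n::finite \<Rightarrow> complex) \<Rightarrow> real" where
  "vnorm2 v = sqrt (\<Sum>k\<in>UNIV. (cmod (v k))\<^sup>2)"

definition vconj :: "('n \<Rightarrow> complex) \<Rightarrow> ('n \<Rightarrow> complex)" where
  "vconj v = (\<lambda>k. cnj (v k))"

definition orth_proj :: "('n::finite \<Rightarrow> complex) set \<Rightarrow> ('n \<Rightarrow> complex) \<Rightarrow> ('n \<Rightarrow> complex)" where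
  "orth_proj W y = (THE p. p \<in> W \<and> (\<forall>w\<in>W. hinner w (y - p) = 0))"

definition frob :: "nat \<Rightarrow> ('n::finite list \<Rightarrow> complex) \<Rightarrow> real" where
  "frob k T = sqrt (\<Sum>xs\<in>{xs. length xs = k}. (cmod (T xs))\<^sup>2)"

text \<open>Flattening of an order-k tensor with the i-th index (0-based, i < k) as row index:
  a matrix with rows indexed by 'n and columns by lists of length k-1.
  flat_mul: M v ;  flat_adj_mul: M^H u.\<close>
definition ins_at :: "nat \<Rightarrow> 'n \<Rightarrow> 'n list \<Rightarrow> 'n list" where
  "ins_at i a rest = take i rest @ a # drop i rest"

definition flat_mul :: "nat \<Rightarrow> nat \<Rightarrow> ('n::finite list \<Rightarrow> complex) \<Rightarrow> ('n list \<Rightarrow> complex) \<Rightarrow> ('n \<Rightarrow> complex)" where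
  "flat_mul k i T v = (\<lambda>a. \<Sum>rest\<in>{rs. length rs = k - 1}. T (ins_at i a rest) * v rest)"

definition flat_adj_mul :: "nat \<Rightarrow> nat \<Rightarrow> ('n::finite list \<Rightarrow> complex) \<Rightarrow> ('n \<Rightarrow> complex) \<Rightarrow> ('n list \<Rightarrow> complex)" where
  "flat_adj_mul k i T u = (\<lambda>rest. \<Sum>a\<in>UNIV. cnj (T (ins_at i a rest)) * u a)"

definition left_sing_vecs_ge :: "nat \<Rightarrow> nat \<Rightarrow> ('n::finite list \<Rightarrow> complex) \<Rightarrow> real \<Rightarrow> ('n \<Rightarrow> complex) set" where
  "left_sing_vecs_ge k i T \<delta> = {u. u \<noteq> 0 \<and> (\<exists>\<sigma>::real. \<sigma> \<ge> \<delta> \<and> (\<exists>v. 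
      flat_mul k i T v = (\<lambda>a. complex_of_real \<sigma> * u a) \<and>
      (\<forall>rest. length rest = k - 1 \<longrightarrow> flat_adj_mul k i T u rest = complex_of_real \<sigma> * v rest)))}"

definition Wsub :: "nat \<Rightarrow> nat \<Rightarrow> ('n::finite list \<Rightarrow> complex) \<Rightarrow> real \<Rightarrow> ('n \<Rightarrow> complex) set" where
  "Wsub k i T \<delta> = cspan (left_sing_vecs_ge k i T \<delta>)"

definition polyf :: "nat \<Rightarrow> complex \<Rightarrow> (nat \<Rightarrow> 'n::finite list \<Rightarrow> complex) \<Rightarrow> ('n \<Rightarrow> complex) \<Rightarrow> complex" where
  "polyf d T0 T x = T0 + (\<Sum>j=1..d. \<Sum>xs\<in>{xs. length xs = 2*j}.
      T j xs * (\<Prod>k<j. cnj (x (xs!k))) * (\<Prod>k\<in>{j..<2*j}. x (xs!k)))"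

end

theory Submission
  imports Defs
begin

text \<open>Let \<open>\<delta> = \<epsilon> / (d + 1)\<^sup>2\<close> and \<open>z = y - \<Pi>\<^sub>W y\<close>. Telescoping over the factor
  positions writes \<open>f(y) - f(\<Pi>\<^sub>W y)\<close> as a sum of \<open>d(d + 1)\<close> pairings of some \<open>T\<^sup>(\<^sup>j\<^sup>)\<close>
  with a product of vectors of norm at most one, one of which, at position \<open>i\<close>, is \<open>z\<close> or
  \<open>z\<^sup>*\<close>. Contracting the other factors (Cauchy--Schwarz) bounds such a pairing by
  \<open>\<parallel>M\<^sup>H u\<parallel>\<close> for \<open>M = M\<^sub>j\<^sub>,\<^sub>i\<close> and \<open>u \<in> {z, z\<^sup>*}\<close>; as \<open>W\<close> contains \<open>W\<^sub>j\<^sub>,\<^sub>i\<close> and its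
  conjugate, \<open>u\<close> is orthogonal to all left singular vectors with singular value \<open>\<ge> \<delta>\<close>.

  Both halves rest on the variational principle for the Gram operator \<open>M M\<^sup>H\<close>: an extremizer
  of the Rayleigh quotient \<open>\<parallel>M\<^sup>H u\<parallel>\<^sup>2 / \<parallel>u\<parallel>\<^sup>2\<close> on an invariant subspace is an eigenvector,
  hence a left singular vector. So the quotient is below \<open>\<delta>\<^sup>2\<close> on the orthogonal complement of
  the large singular directions, giving the error bound \<open>d(d + 1) \<delta> \<le> \<epsilon>\<close>, and at least
  \<open>\<delta>\<^sup>2\<close> on \<open>W\<^sub>j\<^sub>,\<^sub>i\<close>. In the latter case Bessel's inequality for the rows of \<open>M\<close> against an
  orthonormal basis of \<open>W\<^sub>j\<^sub>,\<^sub>i\<close> gives \<open>dim W\<^sub>j\<^sub>,\<^sub>i \<le> \<parallel>T\<^sup>(\<^sup>j\<^sup>)\<parallel>\<^sub>F\<^sup>2 / \<delta>\<^sup>2 \<le> 1 / \<delta>\<^sup>2\<close>, and summing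
  over the \<open>d(d + 1)\<close> subspaces and their conjugates gives
  \<open>dim W \<le> 2 d (d + 1) / \<delta>\<^sup>2 \<le> 8 (d + 1)\<^sup>6 / \<epsilon>\<^sup>2\<close>.\<close>

section \<open>The Hermitian space of complex vectors\<close>

lemma sum_fun_apply: "(sum f A) k = (\<Sum>a\<in>A. f a k)"
  by (induction A rule: infinite_finite_induct) auto

lemma cscale_apply: "cscale c v k = c * v k"
  by (simp add: cscale_def)

interpretation cvec: vector_space cscale
  by unfold_locales (auto simp: cscale_def fun_eq_iff algebra_simps)

definition unit_vec :: "'n \<Rightarrow> 'n \<Rightarrow> complex" where
  "unit_vec k = (\<lambda>j. if j = k then 1 else 0)"

lemma vec_eq_sum_unit_vec: "(v::'n::finite \<Rightarrow> complex) = (\<Sum>k\<in>UNIV. cscale (v k) (unit_vec k))"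
  by (auto simp: fun_eq_iff sum_fun_apply unit_vec_def if_distrib cscale_apply cong: if_cong)

lemma cvec_span_unit_vecs: "cvec.span (range unit_vec) = (UNIV :: ('n::finite \<Rightarrow> complex) set)"
proof -
  have "v \<in> cvec.span (range unit_vec)" for v :: "'n \<Rightarrow> complex"
    by (subst vec_eq_sum_unit_vec) (intro cvec.span_sum cvec.span_scale cvec.span_base, auto)
  then show ?thesis by auto
qed

lemma cvec_independent_imp_finite: "cvec.independent (B :: ('n::finite \<Rightarrow> complex) set) \<Longrightarrow> finite B"
  using cvec.independent_span_bound[of "range unit_vec" B] cvec_span_unit_vecs by auto

lemma cvec_dim_Un_le: "cvec.dim (A \<union> B :: ('n::finite \<Rightarrow> complex) set) \<le> cvec.dim A + cvec.dim B"
proof -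
  obtain BA where BA: "BA \<subseteq> A" "cvec.independent BA" "A \<subseteq> cvec.span BA" "card BA = cvec.dim A"
    using cvec.basis_exists by blast
  obtain BB where BB: "BB \<subseteq> B" "cvec.independent BB" "B \<subseteq> cvec.span BB" "card BB = cvec.dim B"
    using cvec.basis_exists by blast
  have "A \<union> B \<subseteq> cvec.span (BA \<union> BB)"
    using BA(3) BB(3) cvec.span_mono[of BA "BA \<union> BB"] cvec.span_mono[of BB "BA \<union> BB"] by auto
  then have "cvec.dim (A \<union> B) \<le> card (BA \<union> BB)"
    using BA(2) BB(2) cvec_independent_imp_finite by (intro cvec.dim_le_card) auto
  also have "\<dots> \<le> card BA + card BB" by (rule card_Un_le)
  finally show ?thesis using BA(4) BB(4) by simp
qed

lemma cvec_dim_UN_le: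
  assumes "finite P"
  shows "cvec.dim (\<Union>p\<in>P. F p :: ('n::finite \<Rightarrow> complex) set) \<le> (\<Sum>p\<in>P. cvec.dim (F p))"
  using assms
proof (induction P rule: finite_induct)
  case empty
  show ?case using cvec.dim_le_card[of "{}" "{}"] by simp
next
  case (insert x P)
  then show ?case using cvec_dim_Un_le[of "F x" "\<Union>p\<in>P. F p"] by simp
qed

lemma vconj_vconj [simp]: "vconj (vconj x) = x"
  by (simp add: vconj_def)

lemma vconj_diff: "vconj (x - y) = vconj x - vconj y"
  by (simp add: vconj_def fun_eq_iff)

lemma vconj_span_subset: "vconj ` cvec.span S \<subseteq> cvec.span (vconj ` (S :: ('n \<Rightarrow> complex) set))"
proof -
  have "cvec.subspace {x. vconj x \<in> cvec.span (vconj ` S)}"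
  proof -
    have "vconj (x + y) = vconj x + vconj y" "vconj (cscale c x) = cscale (cnj c) (vconj x)"
      for x y :: "'n \<Rightarrow> complex" and c
      by (simp_all add: vconj_def fun_eq_iff cscale_apply)
    moreover have "vconj 0 = (0 :: 'n \<Rightarrow> complex)" by (simp add: vconj_def zero_fun_def)
    ultimately show ?thesis
      unfolding cvec.subspace_def by (auto simp: cvec.span_zero intro: cvec.span_add cvec.span_scale)
  qed
  then have "cvec.span S \<subseteq> {x. vconj x \<in> cvec.span (vconj ` S)}"
    by (rule cvec.span_minimal[rotated]) (auto intro: cvec.span_base)
  then show ?thesis by auto
qed

lemma cvec_dim_vconj_image_le: "cvec.dim (vconj ` S) \<le> cvec.dim (S :: ('n::finite \<Rightarrow> complex) set)"
proof -
  obtain B where B: "cvec.independent B" "S \<subseteq> cvec.span B" "card B = cvec.dim S"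
    using cvec.basis_exists by blast
  have "vconj ` S \<subseteq> cvec.span (vconj ` B)"
    using B(2) vconj_span_subset by blast
  then have "cvec.dim (vconj ` S) \<le> card (vconj ` B)"
    using cvec_independent_imp_finite[OF B(1)] by (intro cvec.dim_le_card) auto
  also have "\<dots> \<le> card B" by (rule card_image_le) (rule cvec_independent_imp_finite[OF B(1)])
  finally show ?thesis using B(3) by simp
qed

lemma hinner_add_left: "hinner (x + y) z = hinner x z + hinner y z"
  by (simp add: hinner_def algebra_simps sum.distrib)

lemma hinner_add_right: "hinner x (y + z) = hinner x y + hinner x z"
  by (simp add: hinner_def algebra_simps sum.distrib)

lemma hinner_diff_left: "hinner (x - y) z = hinner x z - hinner y z"
  by (simp add: hinner_def algebra_simps sum_subtractf)

lemma hinner_diff_right: "hinner x (y - z) = hinner x y - hinner x z"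
  by (simp add: hinner_def algebra_simps sum_subtractf)

lemma hinner_scale_left: "hinner (cscale c x) y = cnj c * hinner x y"
  by (simp add: hinner_def algebra_simps sum_distrib_left cscale_apply)

lemma hinner_scale_right: "hinner x (cscale c y) = c * hinner x y"
  by (simp add: hinner_def algebra_simps sum_distrib_left cscale_apply)

lemma hinner_sum_left: "hinner (sum f A) y = (\<Sum>a\<in>A. hinner (f a) y)"
  unfolding hinner_def sum_fun_apply by (simp add: sum_distrib_right sum.swap[of _ UNIV])

lemma hinner_sum_right: "hinner y (sum f A) = (\<Sum>a\<in>A. hinner y (f a))"
  unfolding hinner_def sum_fun_apply by (simp add: sum_distrib_left sum.swap[of _ UNIV])

lemma hinner_zero_left [simp]: "hinner 0 y = 0"
  by (simp add: hinner_def)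

lemma hinner_zero_right [simp]: "hinner x 0 = 0"
  by (simp add: hinner_def)

lemma hinner_commute: "hinner y x = cnj (hinner x y)"
  by (simp add: hinner_def mult.commute)

lemma hinner_vconj: "hinner (vconj x) (vconj y) = cnj (hinner x y)"
  by (simp add: hinner_def vconj_def)

lemma cnj_mult_self: "cnj z * z = complex_of_real ((cmod z)\<^sup>2)"
  by (metis complex_norm_square mult.commute)

lemma vnorm2_nonneg: "vnorm2 x \<ge> 0"
  unfolding vnorm2_def by (intro real_sqrt_ge_zero sum_nonneg) simp

lemma vnorm2_power2: "(vnorm2 x)\<^sup>2 = (\<Sum>k\<in>UNIV. (cmod (x k))\<^sup>2)"
  unfolding vnorm2_def by (rule real_sqrt_pow2) (simp add: sum_nonneg)

lemma hinner_self: "hinner x x = complex_of_real ((vnorm2 x)\<^sup>2)"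
  by (simp add: hinner_def vnorm2_power2 cnj_mult_self)

lemma vnorm2_eq_0_iff: "vnorm2 x = 0 \<longleftrightarrow> x = 0"
proof
  assume "vnorm2 x = 0"
  then have "(\<Sum>k\<in>UNIV. (cmod (x k))\<^sup>2) = 0" using vnorm2_power2[of x] by simp
  then show "x = 0" by (subst (asm) sum_nonneg_eq_0_iff) (auto simp: fun_eq_iff)
qed (simp add: vnorm2_def)

lemma hinner_self_eq_0: "hinner x x = 0 \<longleftrightarrow> x = 0"
  using vnorm2_eq_0_iff[of x] by (simp add: hinner_self)

lemma vnorm2_scale: "vnorm2 (cscale c x) = cmod c * vnorm2 x"
proof -
  have "(vnorm2 (cscale c x))\<^sup>2 = (cmod c * vnorm2 x)\<^sup>2"
    by (simp add: vnorm2_power2 power_mult_distrib norm_mult sum_distrib_left cscale_apply)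
  then show ?thesis using vnorm2_nonneg[of x] vnorm2_nonneg[of "cscale c x"] by simp
qed

lemma vnorm2_vconj: "vnorm2 (vconj x) = vnorm2 x"
  by (simp add: vnorm2_def vconj_def)

lemma vnorm2_add_orthogonal:
  assumes "hinner w z = 0"
  shows "(vnorm2 (w + z))\<^sup>2 = (vnorm2 w)\<^sup>2 + (vnorm2 z)\<^sup>2"
proof -
  have "hinner z w = 0" using assms by (subst hinner_commute) simp
  then have "hinner (w + z) (w + z) = hinner w w + hinner z z"
    by (simp add: hinner_add_left hinner_add_right assms)
  then have "complex_of_real ((vnorm2 (w + z))\<^sup>2) = complex_of_real ((vnorm2 w)\<^sup>2 + (vnorm2 z)\<^sup>2)"
    by (simp add: hinner_self)
  then show ?thesis using of_real_eq_iff by blast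
qed

section \<open>Orthonormal systems\<close>

definition orthonormal :: "('n::finite \<Rightarrow> complex) set \<Rightarrow> bool" where
  "orthonormal E \<longleftrightarrow> (\<forall>e\<in>E. \<forall>f\<in>E. hinner e f = (if e = f then 1 else 0))"

lemma hinner_span_eq_0:
  assumes "\<forall>e\<in>E. hinner e z = 0" "w \<in> cvec.span E"
  shows "hinner w z = 0"
proof -
  have "cvec.subspace {w. hinner w z = 0}"
    by (auto simp: cvec.subspace_def hinner_add_left hinner_scale_left)
  then have "cvec.span E \<subseteq> {w. hinner w z = 0}" using assms(1) by (intro cvec.span_minimal) auto
  then show ?thesis using assms(2) by auto
qed

lemma hinner_orthonormal_expansion:
  assumes "finite E" "orthonormal E" "e' \<in> E"
  shows "hinner e' (\<Sum>e\<in>E. cscale (hinner e x) e) = hinner e' x"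
proof -
  have "hinner e' (\<Sum>e\<in>E. cscale (hinner e x) e) = (\<Sum>e\<in>E. hinner e x * hinner e' e)"
    by (simp add: hinner_sum_right hinner_scale_right)
  also have "\<dots> = (\<Sum>e\<in>E. if e = e' then hinner e' x else 0)"
    using assms by (intro sum.cong refl) (auto simp: orthonormal_def)
  finally show ?thesis using assms by simp
qed

lemma bessel_inequality:
  assumes "finite E" "orthonormal E"
  shows "(\<Sum>e\<in>E. (cmod (hinner e c))\<^sup>2) \<le> (vnorm2 c)\<^sup>2"
proof -
  define p where "p = (\<Sum>e\<in>E. cscale (hinner e c) e)"
  define S where "S = (\<Sum>e\<in>E. (cmod (hinner e c))\<^sup>2)"
  have pe: "hinner e p = hinner e c" if "e \<in> E" for e
    using hinner_orthonormal_expansion[OF assms that] by (simp add: p_def)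
  have sum_S: "(\<Sum>e\<in>E. cnj (hinner e c) * hinner e c) = complex_of_real S"
    by (simp add: S_def cnj_mult_self)
  have pc: "hinner p c = complex_of_real S"
    by (simp add: p_def hinner_sum_left hinner_scale_left sum_S)
  have pp: "hinner p p = complex_of_real S"
  proof -
    have "hinner p p = (\<Sum>e\<in>E. cnj (hinner e c) * hinner e p)"
      by (simp add: p_def hinner_sum_left hinner_scale_left)
    also have "\<dots> = (\<Sum>e\<in>E. cnj (hinner e c) * hinner e c)"
      by (intro sum.cong refl) (simp add: pe)
    finally show ?thesis using sum_S by simp
  qed
  have cp: "hinner c p = complex_of_real S"
    using pc by (subst hinner_commute) simp
  have "complex_of_real ((vnorm2 (c - p))\<^sup>2) = hinner (c - p) (c - p)"
    by (simp add: hinner_self)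
  also have "\<dots> = hinner c c - complex_of_real S"
    by (simp add: hinner_diff_left hinner_diff_right pp pc cp)
  also have "\<dots> = complex_of_real ((vnorm2 c)\<^sup>2 - S)"
    by (simp add: hinner_self)
  finally have "(vnorm2 (c - p))\<^sup>2 = (vnorm2 c)\<^sup>2 - S"
    using of_real_eq_iff by blast
  then show ?thesis unfolding S_def[symmetric] by (metis diff_ge_0_iff_ge zero_le_power2)
qed

lemma gram_schmidt_step:
  assumes E: "finite E" "orthonormal E" and x: "x \<notin> cvec.span E"
  obtains e' where "e' \<notin> E" "orthonormal (insert e' E)"
    "cvec.span (insert e' E) = cvec.span (insert x E)"
proof -
  define p where "p = (\<Sum>e\<in>E. cscale (hinner e x) e)"
  define h where "h = x - p"
  define nh where "nh = vnorm2 h"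
  define e' where "e' = cscale (complex_of_real (1 / nh)) h"
  have p_span: "p \<in> cvec.span E"
    unfolding p_def by (intro cvec.span_sum cvec.span_scale cvec.span_base)
  have "h \<noteq> 0" using p_span x by (auto simp: h_def)
  then have nh_pos: "nh > 0"
    using vnorm2_eq_0_iff[of h] vnorm2_nonneg[of h] by (simp add: nh_def)
  have e'_orth: "hinner e e' = 0" if "e \<in> E" for e
    using hinner_orthonormal_expansion[OF E that, of x]
    by (simp add: e'_def h_def p_def hinner_scale_right hinner_diff_right)
  have e'_orth': "hinner e' e = 0" if "e \<in> E" for e
    using e'_orth[OF that] by (subst hinner_commute) simp
  have "hinner e' e' = complex_of_real (1 / nh) * complex_of_real (1 / nh) * hinner h h"
    by (simp add: e'_def hinner_scale_left hinner_scale_right)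
  then have e'_unit: "hinner e' e' = 1"
    using nh_pos by (simp add: hinner_self nh_def[symmetric] power2_eq_square)
  have e'_notin: "e' \<notin> E" using e'_orth e'_unit by force
  have "orthonormal (insert e' E)"
    using E(2) e'_orth e'_orth' e'_unit e'_notin unfolding orthonormal_def by auto
  moreover have "cvec.span (insert e' E) = cvec.span (insert x E)"
    unfolding cvec.span_eq
  proof
    have "x \<in> cvec.span (insert x E)" "p \<in> cvec.span (insert x E)"
      using p_span cvec.span_mono[of E "insert x E"] by (auto intro: cvec.span_base)
    then have "e' \<in> cvec.span (insert x E)"
      unfolding e'_def h_def by (intro cvec.span_scale cvec.span_diff)
    then show "insert e' E \<subseteq> cvec.span (insert x E)"
      by (auto intro: cvec.span_base)
    have "x = cscale (complex_of_real nh) e' + p"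
      using nh_pos by (simp add: e'_def h_def fun_eq_iff cscale_apply)
    also have "\<dots> \<in> cvec.span (insert e' E)"
      using p_span cvec.span_mono[of E "insert e' E"]
      by (intro cvec.span_add cvec.span_scale) (auto intro: cvec.span_base)
    finally show "insert x E \<subseteq> cvec.span (insert e' E)"
      by (auto intro: cvec.span_base)
  qed
  ultimately show ?thesis using e'_notin that by blast
qed

lemma gram_schmidt:
  assumes "finite B" "cvec.independent B"
  shows "\<exists>E. finite E \<and> orthonormal E \<and> card E = card B \<and> cvec.span E = cvec.span B"
  using assms
proof (induction B rule: finite_induct)
  case empty
  then show ?case by (intro exI[of _ "{}"]) (auto simp: orthonormal_def)
next
  case (insert x B)
  obtain E where E: "finite E" "orthonormal E" "card E = card B" "cvec.span E = cvec.span B"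
    using insert by (auto simp: cvec.independent_insert)
  have "x \<notin> cvec.span E"
    using insert.prems insert.hyps(2) E(4) by (simp add: cvec.independent_insert)
  then obtain e' where e': "e' \<notin> E" "orthonormal (insert e' E)"
      "cvec.span (insert e' E) = cvec.span (insert x E)"
    using gram_schmidt_step[OF E(1,2)] by blast
  have "cvec.span (insert x E) = cvec.span (insert x B)"
    using E(4) by (simp add: cvec.span_insert)
  then show ?case
    using E e' insert.hyps by (intro exI[of _ "insert e' E"]) simp
qed

lemma orthonormal_basis_exists:
  obtains E where "finite E" "orthonormal E" "card E = cvec.dim X"
    "cvec.span E = cvec.span (X :: ('n::finite \<Rightarrow> complex) set)"
proof -
  obtain B where B: "B \<subseteq> X" "cvec.independent B" "X \<subseteq> cvec.span B" "card B = cvec.dim X"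
    using cvec.basis_exists by blast
  obtain E where E: "finite E" "orthonormal E" "card E = card B" "cvec.span E = cvec.span B"
    using gram_schmidt[OF cvec_independent_imp_finite[OF B(2)] B(2)] by blast
  have "cvec.span B = cvec.span X"
    using B(1,3) by (metis cvec.span_mono cvec.span_span subset_antisym)
  then show ?thesis using that E B(4) by auto
qed

lemma orth_proj_span:
  fixes X :: "('n::finite \<Rightarrow> complex) set"
  shows "orth_proj (cvec.span X) y \<in> cvec.span X"
    and "\<And>w. w \<in> cvec.span X \<Longrightarrow> hinner w (y - orth_proj (cvec.span X) y) = 0"
proof -
  obtain E where E: "finite E" "orthonormal E" "cvec.span E = cvec.span X"
    using orthonormal_basis_exists by metis
  define p where "p = (\<Sum>e\<in>E. cscale (hinner e y) e)"
  have p_in: "p \<in> cvec.span X" unfolding p_def E(3)[symmetric]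
    by (intro cvec.span_sum cvec.span_scale cvec.span_base)
  have "\<forall>e\<in>E. hinner e (y - p) = 0"
    using hinner_orthonormal_expansion[OF E(1,2)] by (simp add: hinner_diff_right p_def)
  then have p_orth: "\<forall>w\<in>cvec.span X. hinner w (y - p) = 0"
    using E(3) hinner_span_eq_0 by blast
  have "q = p" if "q \<in> cvec.span X" "\<forall>w\<in>cvec.span X. hinner w (y - q) = 0" for q
  proof -
    have d: "p - q \<in> cvec.span X" using p_in that(1) by (rule cvec.span_diff)
    have "hinner (p - q) (p - q) = hinner (p - q) (y - q) - hinner (p - q) (y - p)"
      by (simp add: hinner_diff_right)
    also have "\<dots> = 0" using d that(2) p_orth by simp
    finally show ?thesis using hinner_self_eq_0[of "p - q"] by simp
  qed
  then have "orth_proj (cvec.span X) y = p"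
    unfolding orth_proj_def using p_in p_orth by (intro the_equality) blast+
  then show "orth_proj (cvec.span X) y \<in> cvec.span X"
    and "\<And>w. w \<in> cvec.span X \<Longrightarrow> hinner w (y - orth_proj (cvec.span X) y) = 0"
    using p_in p_orth by simp_all
qed

section \<open>Tensors as functions on index lists\<close>

abbreviation tuples :: "nat \<Rightarrow> 'n list set" where
  "tuples m \<equiv> {xs. length xs = m}"

lemma nth_ins_at_less: "k < i \<Longrightarrow> i \<le> length rest \<Longrightarrow> ins_at i a rest ! k = rest ! k"
  by (simp add: ins_at_def nth_append)

lemma nth_ins_at_same: "i \<le> length rest \<Longrightarrow> ins_at i a rest ! i = a"
  by (simp add: ins_at_def nth_append)

lemma nth_ins_at_Suc: "i \<le> k \<Longrightarrow> k < length rest \<Longrightarrow> ins_at i a rest ! Suc k = rest ! k"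
  by (simp add: ins_at_def nth_append min_def)

lemma sum_tuples_ins_at:
  assumes "i < K"
  shows "(\<Sum>xs\<in>tuples K. F xs) = (\<Sum>a\<in>(UNIV::'n::finite set). \<Sum>rest\<in>tuples (K - 1). F (ins_at i a rest))"
proof -
  have bij: "bij_betw (\<lambda>(a, rest). ins_at i a rest) (UNIV \<times> tuples (K - 1)) (tuples K)"
    by (rule bij_betw_byWitness[where f' = "\<lambda>xs. (xs ! i, take i xs @ drop (Suc i) xs)"])
       (use assms in \<open>auto simp: ins_at_def nth_append id_take_nth_drop[symmetric]\<close>)
  have "(\<Sum>xs\<in>tuples K. F xs) = (\<Sum>p\<in>UNIV \<times> tuples (K - 1). F ((\<lambda>(a, rest). ins_at i a rest) p))"
    using sum.reindex_bij_betw[OF bij, of F] by simp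
  then show ?thesis by (simp add: sum.cartesian_product case_prod_beta)
qed

lemma sum_tuples_prod:
  "(\<Sum>rs\<in>tuples m. \<Prod>k<m. u k (rs ! k)) = (\<Prod>k<m. \<Sum>a\<in>(UNIV::'n::finite set). (u k a :: 'c::comm_semiring_1))"
proof (induction m arbitrary: u)
  case 0
  then show ?case by simp
next
  case (Suc m)
  have "(\<Sum>rs\<in>tuples (Suc m). \<Prod>k<Suc m. u k (rs ! k))
      = (\<Sum>a\<in>(UNIV::'n set). \<Sum>rest\<in>tuples m. \<Prod>k<Suc m. u k ((a # rest) ! k))"
    using sum_tuples_ins_at[of 0 "Suc m" "\<lambda>rs. \<Prod>k<Suc m. u k (rs ! k)"] by (simp add: ins_at_def)
  also have "\<dots> = (\<Sum>a\<in>(UNIV::'n set). u 0 a * (\<Sum>rest\<in>tuples m. \<Prod>k<m. u (Suc k) (rest ! k)))"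
    by (simp only: prod.lessThan_Suc_shift nth_Cons_0 nth_Cons_Suc sum_distrib_left)
  also have "\<dots> = (\<Sum>a\<in>(UNIV::'n set). u 0 a) * (\<Prod>k<m. \<Sum>a\<in>(UNIV::'n set). u (Suc k) a)"
    using Suc.IH[of "\<lambda>k. u (Suc k)"] by (simp add: sum_distrib_right)
  also have "\<dots> = (\<Prod>k<Suc m. \<Sum>a\<in>(UNIV::'n set). u k a)"
    by (simp only: prod.lessThan_Suc_shift)
  finally show ?case .
qed

lemma prod_diff_telescope:
  fixes a b :: "nat \<Rightarrow> 'c::comm_ring_1"
  shows "(\<Prod>k<K. a k) - (\<Prod>k<K. b k) = (\<Sum>i<K. (\<Prod>k<i. b k) * (a i - b i) * (\<Prod>k\<in>{Suc i..<K}. a k))"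
proof (induction K)
  case 0
  then show ?case by simp
next
  case (Suc K)
  have e: "(\<Prod>k\<in>{Suc i..<Suc K}. a k) = (\<Prod>k\<in>{Suc i..<K}. a k) * a K" if "i < K" for i
    using that by (simp add: prod.atLeastLessThan_Suc)
  have "(\<Prod>k<Suc K. a k) - (\<Prod>k<Suc K. b k) = ((\<Prod>k<K. a k) - (\<Prod>k<K. b k)) * a K + (\<Prod>k<K. b k) * (a K - b K)"
    by (simp add: algebra_simps)
  also have "\<dots> = (\<Sum>i<Suc K. (\<Prod>k<i. b k) * (a i - b i) * (\<Prod>k\<in>{Suc i..<Suc K}. a k))"
    by (simp add: Suc.IH sum_distrib_right e mult.assoc)
  finally show ?case .
qed

lemma prod_lessThan_split_at:
  assumes "i < K"
  shows "(\<Prod>k<K. g k) = (\<Prod>k<i. g k) * g i * (\<Prod>k\<in>{Suc i..<K}. (g k :: 'c::comm_monoid_mult))"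
proof -
  have "{..<K} = {..<i} \<union> {i..<K}" using assms by auto
  then have "(\<Prod>k<K. g k) = (\<Prod>k<i. g k) * (\<Prod>k\<in>{i..<K}. g k)"
    by (simp add: prod.union_disjoint ivl_disj_int)
  also have "(\<Prod>k\<in>{i..<K}. g k) = g i * (\<Prod>k\<in>{Suc i..<K}. g k)"
    using assms by (simp add: prod.atLeast_Suc_lessThan)
  finally show ?thesis by (simp add: mult.assoc)
qed

definition skip_index :: "nat \<Rightarrow> nat \<Rightarrow> nat" where
  "skip_index i k = (if k < i then k else Suc k)"

lemma prod_lessThan_remove:
  assumes "i < K"
  shows "(\<Prod>k<K. g k) = g i * (\<Prod>k<K - 1. (g (skip_index i k) :: 'c::comm_monoid_mult))"
proof -
  have "{..<K - 1} = {..<i} \<union> {i..<K - 1}" using assms by auto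
  then have "(\<Prod>k<K - 1. g (skip_index i k)) = (\<Prod>k<i. g (skip_index i k)) * (\<Prod>k\<in>{i..<K - 1}. g (skip_index i k))"
    by (simp add: prod.union_disjoint ivl_disj_int)
  also have "\<dots> = (\<Prod>k<i. g k) * (\<Prod>k\<in>{i..<K - 1}. g (Suc k))"
    by (intro arg_cong2[where f = "(*)"] prod.cong) (auto simp: skip_index_def)
  also have "(\<Prod>k\<in>{i..<K - 1}. g (Suc k)) = (\<Prod>k\<in>{Suc i..<K}. g k)"
    using assms prod.shift_bounds_Suc_ivl[of g i "K - 1"] by simp
  finally show ?thesis using prod_lessThan_split_at[OF assms, of g] by (simp add: ac_simps)
qed

lemma nth_ins_at_skip_index:
  "i \<le> length rest \<Longrightarrow> k < length rest \<Longrightarrow> ins_at i a rest ! skip_index i k = rest ! k"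
  by (simp add: skip_index_def nth_ins_at_less nth_ins_at_Suc)

definition tensor_pairing :: "nat \<Rightarrow> ('n::finite list \<Rightarrow> complex) \<Rightarrow> (nat \<Rightarrow> 'n \<Rightarrow> complex) \<Rightarrow> complex" where
  "tensor_pairing K T vs = (\<Sum>xs\<in>tuples K. T xs * (\<Prod>k<K. vs k (xs ! k)))"

definition hybrid :: "(nat \<Rightarrow> 'n \<Rightarrow> complex) \<Rightarrow> (nat \<Rightarrow> 'n \<Rightarrow> complex) \<Rightarrow> nat \<Rightarrow> nat \<Rightarrow> 'n \<Rightarrow> complex" where
  "hybrid a b i = (\<lambda>k. if k < i then b k else if k = i then a i - b i else a k)"

lemma tensor_pairing_diff_telescope:
  fixes T :: "'n::finite list \<Rightarrow> complex"
  shows "tensor_pairing K T a - tensor_pairing K T b = (\<Sum>i<K. tensor_pairing K T (hybrid a b i))"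
proof -
  have "(\<Prod>k<K. a k (xs ! k)) - (\<Prod>k<K. b k (xs ! k)) = (\<Sum>i<K. \<Prod>k<K. hybrid a b i k (xs ! k))"
    for xs :: "'n list"
  proof -
    have "(\<Prod>k<K. hybrid a b i k (xs ! k))
        = (\<Prod>k<i. b k (xs ! k)) * (a i (xs ! i) - b i (xs ! i)) * (\<Prod>k\<in>{Suc i..<K}. a k (xs ! k))"
      if "i < K" for i
      using prod_lessThan_split_at[OF that, of "\<lambda>k. hybrid a b i k (xs ! k)"] by (simp add: hybrid_def)
    then show ?thesis by (simp add: prod_diff_telescope)
  qed
  then have "tensor_pairing K T a - tensor_pairing K T b
      = (\<Sum>xs\<in>tuples K. T xs * (\<Sum>i<K. \<Prod>k<K. hybrid a b i k (xs ! k)))"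
    by (simp add: tensor_pairing_def algebra_simps sum.distrib)
  also have "\<dots> = (\<Sum>xs\<in>tuples K. \<Sum>i<K. T xs * (\<Prod>k<K. hybrid a b i k (xs ! k)))"
    by (simp add: sum_distrib_left)
  also have "\<dots> = (\<Sum>i<K. tensor_pairing K T (hybrid a b i))"
    unfolding tensor_pairing_def by (rule sum.swap)
  finally show ?thesis .
qed

section \<open>Flattenings\<close>

definition flat_adj_sqnorm :: "nat \<Rightarrow> nat \<Rightarrow> ('n::finite list \<Rightarrow> complex) \<Rightarrow> ('n \<Rightarrow> complex) \<Rightarrow> real" where
  "flat_adj_sqnorm K i T u = (\<Sum>r\<in>tuples (K - 1). (cmod (flat_adj_mul K i T u r))\<^sup>2)"

lemma tensor_pairing_eq_sum_flat_adj_mul: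
  fixes vs :: "nat \<Rightarrow> 'n::finite \<Rightarrow> complex"
  assumes "i < K"
  shows "tensor_pairing K T vs = (\<Sum>rest\<in>tuples (K - 1).
      (\<Prod>k<K - 1. vs (skip_index i k) (rest ! k)) * cnj (flat_adj_mul K i T (vconj (vs i)) rest))"
proof -
  have "tensor_pairing K T vs
      = (\<Sum>a\<in>UNIV. \<Sum>rest\<in>tuples (K - 1). T (ins_at i a rest) * (\<Prod>k<K. vs k (ins_at i a rest ! k)))"
    unfolding tensor_pairing_def by (rule sum_tuples_ins_at[OF assms])
  also have "\<dots> = (\<Sum>a\<in>UNIV. \<Sum>rest\<in>tuples (K - 1).
      (\<Prod>k<K - 1. vs (skip_index i k) (rest ! k)) * (T (ins_at i a rest) * vs i a))"
  proof (intro sum.cong refl)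
    fix a :: 'n and rest :: "'n list" assume "rest \<in> tuples (K - 1)"
    then have "(\<Prod>k<K. vs k (ins_at i a rest ! k)) = vs i a * (\<Prod>k<K - 1. vs (skip_index i k) (rest ! k))"
      using assms prod_lessThan_remove[OF assms, of "\<lambda>k. vs k (ins_at i a rest ! k)"]
      by (simp add: nth_ins_at_same nth_ins_at_skip_index)
    then show "T (ins_at i a rest) * (\<Prod>k<K. vs k (ins_at i a rest ! k))
        = (\<Prod>k<K - 1. vs (skip_index i k) (rest ! k)) * (T (ins_at i a rest) * vs i a)"
      by (simp add: ac_simps)
  qed
  also have "\<dots> = (\<Sum>rest\<in>tuples (K - 1).
      (\<Prod>k<K - 1. vs (skip_index i k) (rest ! k)) * (\<Sum>a\<in>UNIV. T (ins_at i a rest) * vs i a))"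
    by (subst sum.swap) (simp add: sum_distrib_left)
  finally show ?thesis
    by (simp add: flat_adj_mul_def vconj_def)
qed

text \<open>Cauchy--Schwarz in the tuple index: the remaining factors form a product tensor of norm
  at most one.\<close>

lemma norm_tensor_pairing_le:
  assumes "i < K" and "\<And>k. k < K \<Longrightarrow> k \<noteq> i \<Longrightarrow> vnorm2 (vs k) \<le> 1"
  shows "cmod (tensor_pairing K T vs) \<le> sqrt (flat_adj_sqnorm K i T (vconj (vs i)))"
proof -
  define r where "r = (\<lambda>rest. \<Prod>k<K - 1. vs (skip_index i k) (rest ! k))"
  define q where "q = flat_adj_mul K i T (vconj (vs i))"
  have "cmod (tensor_pairing K T vs) \<le> (\<Sum>rest\<in>tuples (K - 1). cmod (r rest) * cmod (q rest))"
    unfolding tensor_pairing_eq_sum_flat_adj_mul[OF assms(1)] r_def q_def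
    by (rule order_trans[OF norm_sum]) (simp add: norm_mult)
  also have "\<dots> \<le> L2_set (\<lambda>rest. cmod (r rest)) (tuples (K - 1)) * L2_set (\<lambda>rest. cmod (q rest)) (tuples (K - 1))"
    using L2_set_mult_ineq[of "\<lambda>rest. cmod (r rest)" "\<lambda>rest. cmod (q rest)"] by simp
  also have "L2_set (\<lambda>rest. cmod (r rest)) (tuples (K - 1)) \<le> 1"
  proof -
    have "(\<Sum>rest\<in>tuples (K - 1). (cmod (r rest))\<^sup>2)
        = (\<Prod>k<K - 1. \<Sum>a\<in>UNIV. (cmod (vs (skip_index i k) a))\<^sup>2)"
      unfolding r_def
      by (simp add: prod_norm[symmetric] prod_power_distrib sum_tuples_prod[where u = "\<lambda>k a. (cmod (vs (skip_index i k) a))\<^sup>2"])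
    also have "\<dots> \<le> 1"
    proof (rule prod_le_1)
      fix k assume "k \<in> {..<K - 1}"
      then have "vnorm2 (vs (skip_index i k)) \<le> 1"
        using assms by (auto simp: skip_index_def)
      then show "0 \<le> (\<Sum>a\<in>UNIV. (cmod (vs (skip_index i k) a))\<^sup>2) \<and> (\<Sum>a\<in>UNIV. (cmod (vs (skip_index i k) a))\<^sup>2) \<le> 1"
        using vnorm2_nonneg[of "vs (skip_index i k)"] by (simp add: vnorm2_power2[symmetric] power_le_one sum_nonneg)
    qed
    finally show ?thesis by (simp add: L2_set_def)
  qed
  then have "L2_set (\<lambda>rest. cmod (r rest)) (tuples (K - 1)) * L2_set (\<lambda>rest. cmod (q rest)) (tuples (K - 1))
      \<le> L2_set (\<lambda>rest. cmod (q rest)) (tuples (K - 1))"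
    by (intro mult_left_le_one_le L2_set_nonneg) auto
  finally show ?thesis by (simp add: L2_set_def flat_adj_sqnorm_def q_def)
qed

definition flat_gram :: "nat \<Rightarrow> nat \<Rightarrow> ('n::finite list \<Rightarrow> complex) \<Rightarrow> ('n \<Rightarrow> complex) \<Rightarrow> ('n \<Rightarrow> complex)" where
  "flat_gram K i T u = flat_mul K i T (flat_adj_mul K i T u)"

lemma flat_adj_mul_add: "flat_adj_mul K i T (u + w) = (\<lambda>r. flat_adj_mul K i T u r + flat_adj_mul K i T w r)"
  by (simp add: flat_adj_mul_def fun_eq_iff sum.distrib algebra_simps)

lemma flat_adj_mul_scale: "flat_adj_mul K i T (cscale c u) = (\<lambda>r. c * flat_adj_mul K i T u r)"
  by (simp add: flat_adj_mul_def fun_eq_iff sum_distrib_left cscale_apply algebra_simps)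

lemma flat_mul_add: "flat_mul K i T (\<lambda>r. p r + q r) = flat_mul K i T p + flat_mul K i T q"
  by (simp add: flat_mul_def fun_eq_iff sum.distrib algebra_simps)

lemma flat_mul_scale: "flat_mul K i T (\<lambda>r. c * p r) = cscale c (flat_mul K i T p)"
  by (simp add: flat_mul_def fun_eq_iff sum_distrib_left cscale_apply algebra_simps)

lemma flat_mul_cong: "(\<And>r. length r = K - 1 \<Longrightarrow> p r = q r) \<Longrightarrow> flat_mul K i T p = flat_mul K i T q"
  by (simp add: flat_mul_def fun_eq_iff)

lemma flat_gram_add: "flat_gram K i T (u + w) = flat_gram K i T u + flat_gram K i T w"
  by (simp add: flat_gram_def flat_adj_mul_add flat_mul_add)

lemma flat_gram_scale: "flat_gram K i T (cscale c u) = cscale c (flat_gram K i T u)"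
  by (simp add: flat_gram_def flat_adj_mul_scale flat_mul_scale)

lemma hinner_flat_mul:
  "hinner w (flat_mul K i T q) = (\<Sum>r\<in>tuples (K - 1). cnj (flat_adj_mul K i T w r) * q r)"
proof -
  have "hinner w (flat_mul K i T q) = (\<Sum>a\<in>UNIV. \<Sum>r\<in>tuples (K - 1). cnj (w a) * T (ins_at i a r) * q r)"
    by (simp add: hinner_def flat_mul_def sum_distrib_left mult.assoc)
  also have "\<dots> = (\<Sum>r\<in>tuples (K - 1). cnj (flat_adj_mul K i T w r) * q r)"
    by (subst sum.swap) (simp add: flat_adj_mul_def sum_distrib_left sum_distrib_right ac_simps)
  finally show ?thesis .
qed

lemma hinner_flat_gram:
  "hinner w (flat_gram K i T u) = (\<Sum>r\<in>tuples (K - 1). cnj (flat_adj_mul K i T w r) * flat_adj_mul K i T u r)"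
  by (simp add: flat_gram_def hinner_flat_mul)

lemma hinner_flat_gram_commute: "hinner w (flat_gram K i T u) = cnj (hinner u (flat_gram K i T w))"
  by (simp add: hinner_flat_gram mult.commute)

lemma hinner_flat_gram_self: "hinner u (flat_gram K i T u) = complex_of_real (flat_adj_sqnorm K i T u)"
  by (simp add: hinner_flat_gram flat_adj_sqnorm_def cnj_mult_self)

lemma flat_adj_sqnorm_nonneg: "flat_adj_sqnorm K i T u \<ge> 0"
  by (simp add: flat_adj_sqnorm_def sum_nonneg)

lemma flat_adj_sqnorm_scale: "flat_adj_sqnorm K i T (cscale c u) = (cmod c)\<^sup>2 * flat_adj_sqnorm K i T u"
  by (simp add: flat_adj_sqnorm_def flat_adj_mul_scale norm_mult power_mult_distrib sum_distrib_left)

lemma continuous_on_flat_adj_sqnorm: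
  "continuous_on UNIV (\<lambda>x::complex^'n::finite. flat_adj_sqnorm K i T (($) x))"
  unfolding flat_adj_sqnorm_def flat_adj_mul_def by (intro continuous_intros)

lemma flat_adj_sqnorm_add_scale:
  assumes "hinner z h = 0"
  shows "flat_adj_sqnorm K i T (z + cscale (complex_of_real t) h) =
     flat_adj_sqnorm K i T z + 2 * t * Re (hinner h (flat_gram K i T z)) + t\<^sup>2 * flat_adj_sqnorm K i T h"
proof -
  let ?A = "flat_gram K i T"
  define c where "c = hinner h (?A z)"
  have "complex_of_real (flat_adj_sqnorm K i T (z + cscale (complex_of_real t) h))
     = hinner (z + cscale (complex_of_real t) h) (?A (z + cscale (complex_of_real t) h))"
    by (simp add: hinner_flat_gram_self)
  also have "\<dots> = hinner z (?A z) + complex_of_real t * (hinner z (?A h) + hinner h (?A z))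
      + complex_of_real t * complex_of_real t * hinner h (?A h)"
    by (simp add: flat_gram_add flat_gram_scale hinner_add_left hinner_add_right
        hinner_scale_left hinner_scale_right algebra_simps)
  also have "hinner z (?A h) + hinner h (?A z) = complex_of_real (2 * Re c)"
    using complex_add_cnj[of c] by (simp add: c_def hinner_flat_gram_commute[of z] add.commute)
  also have "hinner z (?A z) + complex_of_real t * complex_of_real (2 * Re c)
      + complex_of_real t * complex_of_real t * hinner h (?A h)
      = complex_of_real (flat_adj_sqnorm K i T z + 2 * t * Re c + t\<^sup>2 * flat_adj_sqnorm K i T h)"
    by (simp add: hinner_flat_gram_self power2_eq_square algebra_simps)
  finally show ?thesis using of_real_eq_iff c_def by blast
qed

lemma flat_gram_left_sing_vec:
  assumes "s \<in> left_sing_vecs_ge K i T \<delta>"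
  obtains \<sigma> where "\<sigma> \<ge> \<delta>" "flat_gram K i T s = cscale (complex_of_real (\<sigma>\<^sup>2)) s"
proof -
  obtain \<sigma> v where sv: "\<sigma> \<ge> \<delta>" "flat_mul K i T v = (\<lambda>a. complex_of_real \<sigma> * s a)"
    "\<forall>rest. length rest = K - 1 \<longrightarrow> flat_adj_mul K i T s rest = complex_of_real \<sigma> * v rest"
    using assms unfolding left_sing_vecs_ge_def by blast
  have "flat_gram K i T s = flat_mul K i T (\<lambda>r. complex_of_real \<sigma> * v r)"
    unfolding flat_gram_def using sv(3) by (intro flat_mul_cong) auto
  also have "\<dots> = cscale (complex_of_real (\<sigma>\<^sup>2)) s"
    by (simp add: flat_mul_scale sv(2) cscale_def power2_eq_square mult.assoc)
  finally show ?thesis using sv(1) that by blast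
qed

lemma hinner_left_sing_vec_flat_gram:
  assumes "s \<in> left_sing_vecs_ge K i T \<delta>"
  obtains \<sigma> where "\<sigma> \<ge> \<delta>" "\<And>u. hinner s (flat_gram K i T u) = complex_of_real (\<sigma>\<^sup>2) * hinner s u"
proof -
  obtain \<sigma> where s: "\<sigma> \<ge> \<delta>" "flat_gram K i T s = cscale (complex_of_real (\<sigma>\<^sup>2)) s"
    using flat_gram_left_sing_vec[OF assms] by blast
  have "hinner s (flat_gram K i T u) = complex_of_real (\<sigma>\<^sup>2) * hinner s u" for u
    by (simp add: hinner_flat_gram_commute[of s] s(2) hinner_scale_right hinner_commute[of u s])
  then show ?thesis using that s(1) by blast
qed

section \<open>Rayleigh quotients of flattenings\<close>

lemma linear_le_quadratic_imp_zero:
  fixes H C :: real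
  assumes "\<And>t. 2 * t * H \<le> t\<^sup>2 * C"
  shows "H = 0"
proof (rule ccontr)
  assume "H \<noteq> 0"
  define t where "t = H / (\<bar>C\<bar> + 1)"
  have pos: "\<bar>C\<bar> + 1 > 0" by simp
  have "2 * t * H = 2 * H\<^sup>2 / (\<bar>C\<bar> + 1)" by (simp add: t_def power2_eq_square)
  moreover have "t\<^sup>2 * C \<le> H\<^sup>2 / (\<bar>C\<bar> + 1)"
  proof -
    have "t\<^sup>2 * C \<le> t\<^sup>2 * (\<bar>C\<bar> + 1)" by (intro mult_left_mono) auto
    also have "\<dots> = H\<^sup>2 / (\<bar>C\<bar> + 1)" unfolding t_def using pos by (simp add: power_divide power2_eq_square)
    finally show ?thesis .
  qed
  moreover have "H\<^sup>2 / (\<bar>C\<bar> + 1) > 0" using \<open>H \<noteq> 0\<close> by simp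
  ultimately show False using assms[of t] by linarith
qed

text \<open>The ratio \<open>(m + 2tH + t\<^sup>2G) / (1 + t\<^sup>2H)\<close>, extremal at \<open>t = 0\<close>, cross-multiplied.\<close>

lemma quadratic_ratio_stationary_at_0:
  fixes m H G :: real
  assumes "(\<forall>t. m + 2 * t * H + t\<^sup>2 * G \<le> m * (1 + t\<^sup>2 * H))
    \<or> (\<forall>t. m * (1 + t\<^sup>2 * H) \<le> m + 2 * t * H + t\<^sup>2 * G)"
  shows "H = 0"
proof -
  obtain C where "\<And>t. 2 * t * H \<le> t\<^sup>2 * C"
    using assms
  proof
    assume "\<forall>t. m + 2 * t * H + t\<^sup>2 * G \<le> m * (1 + t\<^sup>2 * H)"
    then have "2 * t * H \<le> t\<^sup>2 * (m * H - G)" for t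
      by (auto simp: algebra_simps)
    then show thesis by (rule that)
  next
    assume "\<forall>t. m * (1 + t\<^sup>2 * H) \<le> m + 2 * t * H + t\<^sup>2 * G"
    then have le: "m * (1 + (- t)\<^sup>2 * H) \<le> m + 2 * (- t) * H + (- t)\<^sup>2 * G" for t
      by blast
    have "2 * t * H \<le> t\<^sup>2 * (G - m * H)" for t
      using le[of t] by (simp add: algebra_simps)
    then show thesis by (rule that)
  qed
  then show ?thesis by (rule linear_le_quadratic_imp_zero)
qed

lemma vnorm2_vec_nth: "vnorm2 (($) x) = norm (x :: complex^'n::finite)"
  by (simp add: norm_vec_def L2_set_def vnorm2_def)

lemma compact_unit_vecs_in_cvec_subspace:
  assumes "cvec.subspace X"
  shows "compact {x::complex^'n::finite. norm x = 1 \<and> ($) x \<in> X}"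
proof -
  have "(($) (c *\<^sub>R x)) = cscale (complex_of_real c) (($) x)" for c and x :: "complex^'n"
    by (simp add: fun_eq_iff cscale_apply) (simp add: scaleR_conv_of_real)
  moreover have "(($) (x + y)) = ($) x + ($) y" "(($) 0) = (0 :: 'n \<Rightarrow> complex)" for x y :: "complex^'n"
    by (simp_all add: fun_eq_iff)
  ultimately have "subspace {x::complex^'n. ($) x \<in> X}"
    using assms unfolding subspace_def cvec.subspace_def by simp
  moreover have "{x. norm x = 1 \<and> ($) x \<in> X} = sphere 0 1 \<inter> {x::complex^'n. ($) x \<in> X}"
    by auto
  ultimately show ?thesis using compact_Int_closed[OF compact_sphere closed_subspace] by simp
qed

lemma rayleigh_extremes_attained:
  fixes X :: "('n::finite \<Rightarrow> complex) set" and g :: "('n \<Rightarrow> complex) \<Rightarrow> real"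
  assumes X: "cvec.subspace X" and u0: "u0 \<in> X" "u0 \<noteq> 0"
    and hom: "\<And>c u. g (cscale c u) = (cmod c)\<^sup>2 * g u"
    and cont: "continuous_on UNIV (\<lambda>x::complex^'n. g (($) x))"
  shows "\<exists>z0\<in>X. vnorm2 z0 = 1 \<and> (\<forall>z\<in>X. g z \<le> g z0 * (vnorm2 z)\<^sup>2)"
    and "\<exists>z0\<in>X. vnorm2 z0 = 1 \<and> (\<forall>z\<in>X. g z0 * (vnorm2 z)\<^sup>2 \<le> g z)"
proof -
  define S where "S = {x::complex^'n. norm x = 1 \<and> ($) x \<in> X}"
  have normalize: "\<exists>x\<in>S. g z = (vnorm2 z)\<^sup>2 * g (($) x)" if "z \<in> X" "z \<noteq> 0" for z
  proof -
    define z' where "z' = cscale (complex_of_real (1 / vnorm2 z)) z"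
    have pos: "vnorm2 z > 0" using that vnorm2_eq_0_iff vnorm2_nonneg by (metis less_eq_real_def)
    have "vnorm2 z' = 1" using pos by (simp add: z'_def vnorm2_scale norm_divide)
    moreover have "z' \<in> X" using X that(1) by (simp add: z'_def cvec.subspace_scale)
    moreover have "g z = (vnorm2 z)\<^sup>2 * g z'"
      using pos by (simp add: z'_def hom norm_divide power_divide)
    ultimately show ?thesis
      by (intro bexI[of _ "\<chi> k. z' k"]) (simp_all add: S_def vnorm2_vec_nth[symmetric] vec_lambda_inverse)
  qed
  have g0: "g 0 = 0" using hom[of 0 0] by (simp add: cscale_def zero_fun_def)
  have upper: "g z \<le> M * (vnorm2 z)\<^sup>2" if M: "\<forall>x\<in>S. g (($) x) \<le> M" and z: "z \<in> X" for z M
  proof (cases "z = 0")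
    case False
    then obtain x where "x \<in> S" "g z = (vnorm2 z)\<^sup>2 * g (($) x)" using normalize z by blast
    then show ?thesis using M mult_right_mono[of "g (($) x)" M "(vnorm2 z)\<^sup>2"] by (simp add: mult.commute)
  qed (simp add: g0 vnorm2_def)
  have lower: "M * (vnorm2 z)\<^sup>2 \<le> g z" if M: "\<forall>x\<in>S. M \<le> g (($) x)" and z: "z \<in> X" for z M
  proof (cases "z = 0")
    case False
    then obtain x where "x \<in> S" "g z = (vnorm2 z)\<^sup>2 * g (($) x)" using normalize z by blast
    then show ?thesis using M mult_right_mono[of M "g (($) x)" "(vnorm2 z)\<^sup>2"] by (simp add: mult.commute)
  qed (simp add: g0 vnorm2_def)
  have mem: "($) x \<in> X \<and> vnorm2 (($) x) = 1" if "x \<in> S" for x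
    using that by (simp add: S_def vnorm2_vec_nth)
  have "S \<noteq> {}" using normalize[OF u0] by blast
  moreover have "continuous_on S (\<lambda>x. g (($) x))" using cont continuous_on_subset by blast
  ultimately obtain xmax xmin where
    "xmax \<in> S" "\<forall>x\<in>S. g (($) x) \<le> g (($) xmax)" "xmin \<in> S" "\<forall>x\<in>S. g (($) xmin) \<le> g (($) x)"
    using compact_unit_vecs_in_cvec_subspace[OF X] continuous_attains_sup continuous_attains_inf
    unfolding S_def[symmetric] by metis
  then show "\<exists>z0\<in>X. vnorm2 z0 = 1 \<and> (\<forall>z\<in>X. g z \<le> g z0 * (vnorm2 z)\<^sup>2)"
    and "\<exists>z0\<in>X. vnorm2 z0 = 1 \<and> (\<forall>z\<in>X. g z0 * (vnorm2 z)\<^sup>2 \<le> g z)"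
    using mem upper lower by blast+
qed

text \<open>The first variation of the Rayleigh quotient at an extremizer vanishes in the direction
  of the component of the Gram image orthogonal to the extremizer.\<close>

lemma flat_gram_eigenvector_at_extremum:
  fixes X :: "('n::finite \<Rightarrow> complex) set" and K i :: nat and T :: "'n list \<Rightarrow> complex"
  defines "g \<equiv> flat_adj_sqnorm K i T"
  assumes X: "cvec.subspace X" and z0: "z0 \<in> X" "vnorm2 z0 = 1"
    and invariant: "flat_gram K i T z0 \<in> X"
    and extremal: "(\<forall>z\<in>X. g z \<le> g z0 * (vnorm2 z)\<^sup>2) \<or> (\<forall>z\<in>X. g z0 * (vnorm2 z)\<^sup>2 \<le> g z)"
  shows "flat_gram K i T z0 = cscale (complex_of_real (g z0)) z0"
proof -
  let ?A = "flat_gram K i T"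
  define m where "m = g z0"
  define h where "h = ?A z0 - cscale (complex_of_real m) z0"
  define H where "H = (vnorm2 h)\<^sup>2"
  define G where "G = g h"
  have h_in: "h \<in> X" unfolding h_def using X invariant z0(1) by (intro cvec.subspace_diff cvec.subspace_scale)
  have "hinner z0 z0 = 1" using z0(2) by (simp add: hinner_self)
  then have z0_h: "hinner z0 h = 0"
    by (simp add: h_def hinner_diff_right hinner_scale_right hinner_flat_gram_self m_def g_def)
  have "?A z0 = h + cscale (complex_of_real m) z0"
    by (simp add: h_def)
  then have "hinner h (?A z0) = hinner h h + complex_of_real m * hinner h z0"
    by (simp add: hinner_add_right hinner_scale_right)
  also have "hinner h z0 = 0" using z0_h by (subst hinner_commute) simp
  finally have h_A: "hinner h (?A z0) = complex_of_real H" by (simp add: H_def hinner_self)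
  have g_line: "g (z0 + cscale (complex_of_real t) h) = m + 2 * t * H + t\<^sup>2 * G" for t
    using flat_adj_sqnorm_add_scale[OF z0_h, of K i T t] h_A by (simp add: g_def m_def G_def)
  have norm_line: "(vnorm2 (z0 + cscale (complex_of_real t) h))\<^sup>2 = 1 + t\<^sup>2 * H" for t
    using vnorm2_add_orthogonal[of z0 "cscale (complex_of_real t) h"] z0(2) z0_h
    by (simp add: hinner_scale_right vnorm2_scale power_mult_distrib H_def)
  have line_in: "z0 + cscale (complex_of_real t) h \<in> X" for t
    using X z0(1) h_in by (intro cvec.subspace_add cvec.subspace_scale)
  have "m + 2 * t * H + t\<^sup>2 * G \<le> m * (1 + t\<^sup>2 * H)" if "\<forall>z\<in>X. g z \<le> g z0 * (vnorm2 z)\<^sup>2" for t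
    using bspec[OF that line_in[of t]] by (simp only: g_line norm_line m_def[symmetric])
  moreover have "m * (1 + t\<^sup>2 * H) \<le> m + 2 * t * H + t\<^sup>2 * G" if "\<forall>z\<in>X. g z0 * (vnorm2 z)\<^sup>2 \<le> g z" for t
    using bspec[OF that line_in[of t]] by (simp only: g_line norm_line m_def[symmetric])
  ultimately have "H = 0"
    using extremal by (intro quadratic_ratio_stationary_at_0[of m H G]) blast
  then have "h = 0" by (simp add: H_def vnorm2_eq_0_iff)
  then show ?thesis by (simp add: h_def m_def)
qed

lemma left_sing_vec_of_flat_gram_eigenvector:
  assumes "flat_gram K i T z = cscale (complex_of_real (\<sigma>\<^sup>2)) z" "z \<noteq> 0" "\<sigma> \<ge> \<delta>" "\<sigma> > 0"
  shows "z \<in> left_sing_vecs_ge K i T \<delta>"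
proof -
  define v where "v = (\<lambda>r. flat_adj_mul K i T z r / complex_of_real \<sigma>)"
  have "flat_mul K i T v = cscale (1 / complex_of_real \<sigma>) (flat_gram K i T z)"
    unfolding flat_gram_def v_def
    using flat_mul_scale[of K i T "1 / complex_of_real \<sigma>" "flat_adj_mul K i T z"] by (simp add: field_simps)
  also have "\<dots> = (\<lambda>a. complex_of_real \<sigma> * z a)"
    using assms(1,4) by (simp add: fun_eq_iff cscale_apply power2_eq_square)
  finally have "flat_mul K i T v = (\<lambda>a. complex_of_real \<sigma> * z a)" .
  moreover have "flat_adj_mul K i T z rest = complex_of_real \<sigma> * v rest" for rest
    using assms(4) by (simp add: v_def)
  ultimately show ?thesis
    unfolding left_sing_vecs_ge_def using assms(2,3) by blast
qed

lemma flat_gram_span_left_sing_vecs: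
  assumes "u \<in> cvec.span (left_sing_vecs_ge K i T \<delta>)"
  shows "flat_gram K i T u \<in> cvec.span (left_sing_vecs_ge K i T \<delta>)"
proof -
  let ?V = "cvec.span (left_sing_vecs_ge K i T \<delta>)"
  have "flat_gram K i T 0 = 0"
    by (simp add: flat_gram_def flat_mul_def flat_adj_mul_def zero_fun_def)
  then have "cvec.subspace {u. flat_gram K i T u \<in> ?V}"
    unfolding cvec.subspace_def
    by (simp add: flat_gram_add flat_gram_scale cvec.span_zero cvec.span_add cvec.span_scale)
  moreover have "left_sing_vecs_ge K i T \<delta> \<subseteq> {u. flat_gram K i T u \<in> ?V}"
  proof
    fix s assume s: "s \<in> left_sing_vecs_ge K i T \<delta>"
    then obtain \<sigma> where "flat_gram K i T s = cscale (complex_of_real (\<sigma>\<^sup>2)) s"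
      by (rule flat_gram_left_sing_vec)
    then show "s \<in> {u. flat_gram K i T u \<in> ?V}" using s by (simp add: cvec.span_scale cvec.span_base)
  qed
  ultimately show ?thesis using assms cvec.span_minimal by blast
qed

lemma flat_adj_sqnorm_le_if_orthogonal:
  assumes \<delta>: "\<delta> > 0" and u: "\<forall>s\<in>left_sing_vecs_ge K i T \<delta>. hinner s u = 0"
  shows "flat_adj_sqnorm K i T u \<le> \<delta>\<^sup>2 * (vnorm2 u)\<^sup>2"
proof (cases "u = 0")
  case True
  then show ?thesis using flat_adj_sqnorm_scale[of K i T 0 0] by (simp add: cscale_def zero_fun_def)
next
  case False
  let ?S = "left_sing_vecs_ge K i T \<delta>" and ?A = "flat_gram K i T" and ?g = "flat_adj_sqnorm K i T"
  define X where "X = {u. \<forall>s\<in>?S. hinner s u = 0}"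
  have X: "cvec.subspace X"
    by (auto simp: X_def cvec.subspace_def hinner_add_right hinner_scale_right)
  obtain z0 where z0: "z0 \<in> X" "vnorm2 z0 = 1" "\<forall>z\<in>X. ?g z \<le> ?g z0 * (vnorm2 z)\<^sup>2"
    using rayleigh_extremes_attained(1)[OF X _ False flat_adj_sqnorm_scale[of K i T]
        continuous_on_flat_adj_sqnorm[of K i T]] u
    by (auto simp: X_def)
  have "hinner s (?A z0) = 0" if s: "s \<in> ?S" for s
  proof -
    obtain \<sigma> where "\<And>u. hinner s (?A u) = complex_of_real (\<sigma>\<^sup>2) * hinner s u"
      using hinner_left_sing_vec_flat_gram[OF s] by metis
    then show ?thesis using z0(1) s by (simp add: X_def)
  qed
  then have "?A z0 \<in> X" by (simp add: X_def)
  then have eig: "?A z0 = cscale (complex_of_real (?g z0)) z0"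
    using flat_gram_eigenvector_at_extremum[OF X z0(1,2)] z0(3) by blast
  have z0_ne: "z0 \<noteq> 0" using z0(2) by (auto simp: vnorm2_def)
  have "?g z0 < \<delta>\<^sup>2"
  proof (rule ccontr)
    assume "\<not> ?g z0 < \<delta>\<^sup>2"
    then have "sqrt (?g z0) \<ge> \<delta>" using \<delta> by (simp add: real_le_rsqrt)
    then have "z0 \<in> ?S"
      using \<delta> eig z0_ne flat_adj_sqnorm_nonneg[of K i T z0]
      by (intro left_sing_vec_of_flat_gram_eigenvector[where \<sigma> = "sqrt (?g z0)"]) auto
    then have "hinner z0 z0 = 0" using z0(1) by (simp add: X_def)
    then show False using z0_ne hinner_self_eq_0 by blast
  qed
  then have "?g z0 * (vnorm2 u)\<^sup>2 \<le> \<delta>\<^sup>2 * (vnorm2 u)\<^sup>2" by (intro mult_right_mono) auto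
  then show ?thesis using z0(3) u by (auto simp: X_def)
qed

text \<open>Eigenvectors of the self-adjoint Gram operator for different eigenvalues are orthogonal,
  so a minimizer with eigenvalue below \<open>\<delta>\<^sup>2\<close> would be orthogonal to its own span.\<close>

lemma flat_adj_sqnorm_ge_if_in_span:
  assumes \<delta>: "\<delta> > 0" and u: "u \<in> cvec.span (left_sing_vecs_ge K i T \<delta>)"
  shows "\<delta>\<^sup>2 * (vnorm2 u)\<^sup>2 \<le> flat_adj_sqnorm K i T u"
proof (cases "u = 0")
  case True
  then show ?thesis using flat_adj_sqnorm_nonneg by (simp add: vnorm2_def)
next
  case False
  let ?S = "left_sing_vecs_ge K i T \<delta>" and ?A = "flat_gram K i T" and ?g = "flat_adj_sqnorm K i T"
  define X where "X = cvec.span ?S"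
  have X: "cvec.subspace X" by (simp add: X_def)
  obtain z0 where z0: "z0 \<in> X" "vnorm2 z0 = 1" "\<forall>z\<in>X. ?g z0 * (vnorm2 z)\<^sup>2 \<le> ?g z"
    using rayleigh_extremes_attained(2)[OF X _ False flat_adj_sqnorm_scale[of K i T]
        continuous_on_flat_adj_sqnorm[of K i T]] u
    by (auto simp: X_def)
  have "?A z0 \<in> X" using z0(1) by (simp add: X_def flat_gram_span_left_sing_vecs)
  then have eig: "?A z0 = cscale (complex_of_real (?g z0)) z0"
    using flat_gram_eigenvector_at_extremum[OF X z0(1,2)] z0(3) by blast
  have "?g z0 \<ge> \<delta>\<^sup>2"
  proof (rule ccontr)
    assume less: "\<not> ?g z0 \<ge> \<delta>\<^sup>2"
    have "hinner s z0 = 0" if s: "s \<in> ?S" for s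
    proof -
      obtain \<sigma> where \<sigma>: "\<sigma> \<ge> \<delta>" "\<And>u. hinner s (?A u) = complex_of_real (\<sigma>\<^sup>2) * hinner s u"
        using hinner_left_sing_vec_flat_gram[OF s] by metis
      have "complex_of_real (\<sigma>\<^sup>2) * hinner s z0 = complex_of_real (?g z0) * hinner s z0"
        using \<sigma>(2)[of z0] unfolding eig hinner_scale_right by (rule sym)
      then have "hinner s z0 = 0 \<or> \<sigma>\<^sup>2 = ?g z0"
        unfolding mult_cancel_right of_real_eq_iff .
      moreover have "\<delta>\<^sup>2 \<le> \<sigma>\<^sup>2" using \<sigma>(1) \<delta> by (simp add: power_mono)
      ultimately show ?thesis using less by auto
    qed
    then have "hinner z0 z0 = 0" using hinner_span_eq_0 z0(1) unfolding X_def by blast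
    then show False using z0(2) by (simp add: hinner_self)
  qed
  then have "\<delta>\<^sup>2 * (vnorm2 u)\<^sup>2 \<le> ?g z0 * (vnorm2 u)\<^sup>2" by (intro mult_right_mono) auto
  also have "\<dots> \<le> ?g u" using z0(3) u by (simp add: X_def)
  finally show ?thesis .
qed

lemma frob_power2: "(frob K T)\<^sup>2 = (\<Sum>xs\<in>tuples K. (cmod (T xs))\<^sup>2)"
  unfolding frob_def by (rule real_sqrt_pow2) (simp add: sum_nonneg)

text \<open>Bessel's inequality applied to the rows of the flattening, one row per tuple \<open>r\<close>.\<close>

lemma card_orthonormal_span_left_sing_vecs_le:
  assumes "i < K" and \<delta>: "\<delta> > 0"
    and E: "finite E" "orthonormal E" "E \<subseteq> cvec.span (left_sing_vecs_ge K i T \<delta>)"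
  shows "real (card E) * \<delta>\<^sup>2 \<le> (frob K T)\<^sup>2"
proof -
  define row where "row = (\<lambda>r a. T (ins_at i a r))"
  have unit: "vnorm2 e = 1" if "e \<in> E" for e
  proof -
    have "hinner e e = 1" using E(2) that by (simp add: orthonormal_def)
    then have "complex_of_real ((vnorm2 e)\<^sup>2) = 1" by (simp only: hinner_self)
    then have "(vnorm2 e)\<^sup>2 = 1" using of_real_eq_1_iff by blast
    then show ?thesis using vnorm2_nonneg[of e] by (simp add: power2_eq_1_iff)
  qed
  have "flat_adj_mul K i T e r = cnj (hinner e (row r))" for e r
    by (simp add: flat_adj_mul_def hinner_def row_def mult.commute)
  then have adj_row: "cmod (flat_adj_mul K i T e r) = cmod (hinner e (row r))" for e r
    by simp
  have "real (card E) * \<delta>\<^sup>2 = (\<Sum>e\<in>E. \<delta>\<^sup>2 * (vnorm2 e)\<^sup>2)" by (simp add: unit)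
  also have "\<dots> \<le> (\<Sum>e\<in>E. flat_adj_sqnorm K i T e)"
    using E(3) by (intro sum_mono flat_adj_sqnorm_ge_if_in_span[OF \<delta>]) auto
  also have "\<dots> = (\<Sum>r\<in>tuples (K - 1). \<Sum>e\<in>E. (cmod (hinner e (row r)))\<^sup>2)"
    unfolding flat_adj_sqnorm_def adj_row by (rule sum.swap)
  also have "\<dots> \<le> (\<Sum>r\<in>tuples (K - 1). (vnorm2 (row r))\<^sup>2)"
    by (intro sum_mono bessel_inequality E)
  also have "\<dots> = (frob K T)\<^sup>2"
    by (simp add: vnorm2_power2 row_def frob_power2 sum_tuples_ins_at[OF assms(1)] sum.swap[of _ UNIV])
  finally show ?thesis .
qed

lemma cdim_Wsub_le:
  assumes "i < K" and "\<delta> > 0"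
  shows "real (cdim (Wsub K i T \<delta>)) \<le> (frob K T)\<^sup>2 / \<delta>\<^sup>2"
proof -
  obtain E where E: "finite E" "orthonormal E" "card E = cvec.dim (left_sing_vecs_ge K i T \<delta>)"
    "cvec.span E = cvec.span (left_sing_vecs_ge K i T \<delta>)"
    using orthonormal_basis_exists by metis
  have "real (card E) * \<delta>\<^sup>2 \<le> (frob K T)\<^sup>2"
    using E cvec.span_superset[of E]
    by (intro card_orthonormal_span_left_sing_vecs_le[OF assms]) auto
  then show ?thesis
    using E(3) assms(2) by (simp add: Wsub_def cspan_def cdim_def field_simps)
qed

section \<open>Projecting onto the large singular directions\<close>

definition pairing_factors :: "nat \<Rightarrow> ('n \<Rightarrow> complex) \<Rightarrow> nat \<Rightarrow> 'n \<Rightarrow> complex" where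
  "pairing_factors j x = (\<lambda>k. if k < j then vconj x else x)"

lemma polyf_eq_sum_tensor_pairing:
  "polyf d T0 T x = T0 + (\<Sum>j=1..d. tensor_pairing (2*j) (T j) (pairing_factors j x))"
proof -
  have "(\<Prod>k<j. cnj (x (xs ! k))) * (\<Prod>k\<in>{j..<2*j}. x (xs ! k)) = (\<Prod>k<2*j. pairing_factors j x k (xs ! k))"
    for j xs
  proof -
    have "{..<2*j} = {..<j} \<union> {j..<2*j}" by auto
    then have "(\<Prod>k<2*j. pairing_factors j x k (xs ! k))
        = (\<Prod>k<j. pairing_factors j x k (xs ! k)) * (\<Prod>k\<in>{j..<2*j}. pairing_factors j x k (xs ! k))"
      by (simp add: prod.union_disjoint ivl_disj_int)
    also have "\<dots> = (\<Prod>k<j. cnj (x (xs ! k))) * (\<Prod>k\<in>{j..<2*j}. x (xs ! k))"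
      by (intro arg_cong2[where f = "(*)"] prod.cong) (auto simp: pairing_factors_def vconj_def)
    finally show ?thesis by simp
  qed
  then show ?thesis unfolding polyf_def tensor_pairing_def by (simp add: mult.assoc)
qed

lemma norm_tensor_pairing_hybrid_le:
  assumes \<delta>: "\<delta> > 0" and "i < K"
    and "\<And>k. k < K \<Longrightarrow> vnorm2 (a k) \<le> 1" "\<And>k. k < K \<Longrightarrow> vnorm2 (b k) \<le> 1"
    and "vnorm2 (a i - b i) \<le> 1"
    and "\<forall>s\<in>left_sing_vecs_ge K i T \<delta>. hinner s (vconj (a i - b i)) = 0"
  shows "cmod (tensor_pairing K T (hybrid a b i)) \<le> \<delta>"
proof -
  let ?u = "vconj (a i - b i)"
  have "hybrid a b i i = a i - b i" by (simp add: hybrid_def)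
  moreover have "cmod (tensor_pairing K T (hybrid a b i)) \<le> sqrt (flat_adj_sqnorm K i T (vconj (hybrid a b i i)))"
    using assms(3,4) by (intro norm_tensor_pairing_le[OF assms(2)]) (auto simp: hybrid_def)
  ultimately have "cmod (tensor_pairing K T (hybrid a b i)) \<le> sqrt (flat_adj_sqnorm K i T ?u)"
    by (simp only:)
  also have "\<dots> \<le> sqrt (\<delta>\<^sup>2 * (vnorm2 ?u)\<^sup>2)"
    using flat_adj_sqnorm_le_if_orthogonal[OF \<delta> assms(6)] by simp
  also have "\<dots> = \<delta> * vnorm2 ?u" using \<delta> vnorm2_nonneg[of ?u] by (simp add: real_sqrt_mult)
  also have "\<dots> \<le> \<delta>" using \<delta> assms(5) by (simp add: mult_left_le_one_le vnorm2_nonneg vnorm2_vconj)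
  finally show ?thesis .
qed

lemma vnorm2_orth_proj_le:
  fixes X :: "('n::finite \<Rightarrow> complex) set"
  assumes "vnorm2 y \<le> 1"
  shows "vnorm2 (orth_proj (cvec.span X) y) \<le> 1" and "vnorm2 (y - orth_proj (cvec.span X) y) \<le> 1"
proof -
  define w where "w = orth_proj (cvec.span X) y"
  have "hinner w (y - w) = 0" unfolding w_def by (intro orth_proj_span)
  then have "(vnorm2 w)\<^sup>2 + (vnorm2 (y - w))\<^sup>2 = (vnorm2 y)\<^sup>2"
    using vnorm2_add_orthogonal[of w "y - w"] by simp
  moreover have "(vnorm2 y)\<^sup>2 \<le> 1\<^sup>2" using assms vnorm2_nonneg[of y] by (intro power_mono)
  ultimately have "(vnorm2 w)\<^sup>2 \<le> 1\<^sup>2" "(vnorm2 (y - w))\<^sup>2 \<le> 1\<^sup>2"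
    using zero_le_power2[of "vnorm2 w"] zero_le_power2[of "vnorm2 (y - w)"] by linarith+
  then show "vnorm2 w \<le> 1" "vnorm2 (y - orth_proj (cvec.span X) y) \<le> 1"
    unfolding w_def[symmetric] by (simp_all add: power2_le_imp_le)
qed

lemma sum_atLeast1_lessThan_double_const:
  "(\<Sum>j=1..d. \<Sum>i<2*j. c) = real d * (real d + 1) * (c :: real)"
proof -
  have "(\<Sum>j=1..d. \<Sum>i<2*j. c) = 2 * (\<Sum>j=1..d. real j) * c"
    by (simp add: sum_distrib_left sum_distrib_right mult_ac)
  also have "2 * (\<Sum>j=1..d. real j) = real d * (real d + 1)"
    using double_gauss_sum_from_Suc_0[of d, where 'a = real] by (simp add: atLeastAtMost_def)
  finally show ?thesis .
qed

lemma norm_polyf_diff_orth_proj_le: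
  fixes T :: "nat \<Rightarrow> 'n::finite list \<Rightarrow> complex"
  assumes \<delta>: "\<delta> > 0" and y: "vnorm2 y \<le> 1"
    and U: "\<And>j i. j \<in> {1..d} \<Longrightarrow> i < 2*j \<Longrightarrow>
      Wsub (2*j) i (T j) \<delta> \<union> vconj ` Wsub (2*j) i (T j) \<delta> \<subseteq> cvec.span U"
  shows "cmod (polyf d T0 T y - polyf d T0 T (orth_proj (cvec.span U) y)) \<le> real d * (real d + 1) * \<delta>"
proof -
  define w where "w = orth_proj (cvec.span U) y"
  define z where "z = y - w"
  have w: "vnorm2 w \<le> 1" and z: "vnorm2 z \<le> 1"
    using vnorm2_orth_proj_le[OF y] by (simp_all add: w_def z_def)
  have z_orth: "hinner x z = 0" if "x \<in> cvec.span U" for x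
    using that orth_proj_span(2) by (simp add: z_def w_def)
  have hybrid_le: "cmod (tensor_pairing (2*j) (T j) (hybrid (pairing_factors j y) (pairing_factors j w) i)) \<le> \<delta>"
    if j: "j \<in> {1..d}" and i: "i < 2*j" for j i
  proof (rule norm_tensor_pairing_hybrid_le[OF \<delta> i])
    have diff: "pairing_factors j y i - pairing_factors j w i = (if i < j then vconj z else z)"
      by (simp add: pairing_factors_def z_def vconj_diff)
    show "vnorm2 (pairing_factors j y i - pairing_factors j w i) \<le> 1"
      using z by (simp add: diff vnorm2_vconj)
    show "\<forall>s\<in>left_sing_vecs_ge (2*j) i (T j) \<delta>.
        hinner s (vconj (pairing_factors j y i - pairing_factors j w i)) = 0"
    proof
      fix s assume "s \<in> left_sing_vecs_ge (2*j) i (T j) \<delta>"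
      then have "s \<in> Wsub (2*j) i (T j) \<delta>"
        by (simp add: Wsub_def cspan_def cvec.span_base)
      then have "hinner s z = 0" "hinner (vconj s) z = 0"
        using U[OF j i] z_orth by auto
      then show "hinner s (vconj (pairing_factors j y i - pairing_factors j w i)) = 0"
        using hinner_vconj[of "vconj s" z] by (simp add: diff)
    qed
  qed (use y w in \<open>auto simp: pairing_factors_def vnorm2_vconj\<close>)
  have "cmod (polyf d T0 T y - polyf d T0 T w)
      = cmod (\<Sum>j=1..d. \<Sum>i<2*j. tensor_pairing (2*j) (T j) (hybrid (pairing_factors j y) (pairing_factors j w) i))"
    by (simp add: polyf_eq_sum_tensor_pairing tensor_pairing_diff_telescope flip: sum_subtractf)
  also have "\<dots> \<le> (\<Sum>j=1..d. \<Sum>i<2*j. \<delta>)"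
    using hybrid_le by (intro order_trans[OF norm_sum] sum_mono order_trans[OF norm_sum]) auto
  also have "\<dots> = real d * (real d + 1) * \<delta>"
    by (rule sum_atLeast1_lessThan_double_const)
  finally show ?thesis by (simp add: w_def)
qed

lemma cdim_span_Wsub_le:
  fixes T :: "nat \<Rightarrow> 'n::finite list \<Rightarrow> complex"
  assumes \<delta>: "\<delta> > 0" and frob: "\<And>j. j \<in> {1..d} \<Longrightarrow> frob (2*j) (T j) \<le> 1"
  shows "real (cdim (cspan (\<Union>j\<in>{1..d}. \<Union>i\<in>{..<2*j}. Wsub (2*j) i (T j) \<delta> \<union> vconj ` Wsub (2*j) i (T j) \<delta>)))
    \<le> 2 * real d * (real d + 1) / \<delta>\<^sup>2"
proof -
  let ?W = "\<lambda>j i. Wsub (2*j) i (T j) \<delta>"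
  have dim_W: "real (cdim (?W j i)) \<le> 1 / \<delta>\<^sup>2" if "j \<in> {1..d}" "i < 2*j" for j i
  proof -
    have "(frob (2*j) (T j))\<^sup>2 \<le> 1"
      using frob[OF that(1)] by (simp add: frob_def power_le_one sum_nonneg)
    then have "(frob (2*j) (T j))\<^sup>2 / \<delta>\<^sup>2 \<le> 1 / \<delta>\<^sup>2"
      by (intro divide_right_mono) auto
    then show ?thesis
      using cdim_Wsub_le[OF that(2) \<delta>, of "T j"] by linarith
  qed
  have "cdim (cspan (\<Union>j\<in>{1..d}. \<Union>i\<in>{..<2*j}. ?W j i \<union> vconj ` ?W j i))
      \<le> (\<Sum>j=1..d. \<Sum>i<2*j. cdim (?W j i) + cdim (vconj ` ?W j i))"
    unfolding cdim_def cspan_def cvec.dim_span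
    by (rule order_trans[OF cvec_dim_UN_le], simp, rule sum_mono,
        rule order_trans[OF cvec_dim_UN_le], simp, rule sum_mono, rule cvec_dim_Un_le)
  also have "\<dots> \<le> (\<Sum>j=1..d. \<Sum>i<2*j. 2 * cdim (?W j i))"
    by (intro sum_mono) (simp add: cdim_def cvec_dim_vconj_image_le)
  finally have "real (cdim (cspan (\<Union>j\<in>{1..d}. \<Union>i\<in>{..<2*j}. ?W j i \<union> vconj ` ?W j i)))
      \<le> real (\<Sum>j=1..d. \<Sum>i<2*j. 2 * cdim (?W j i))"
    by (rule of_nat_mono)
  also have "\<dots> = (\<Sum>j=1..d. \<Sum>i<2*j. 2 * real (cdim (?W j i)))"
    by simp
  also have "\<dots> \<le> (\<Sum>j=1..d. \<Sum>i<2*j. 2 * (1 / \<delta>\<^sup>2))"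
    using dim_W by (intro sum_mono mult_left_mono) auto
  also have "\<dots> = real d * (real d + 1) * (2 * (1 / \<delta>\<^sup>2))"
    by (rule sum_atLeast1_lessThan_double_const)
  also have "\<dots> = 2 * real d * (real d + 1) / \<delta>\<^sup>2"
    by (simp add: field_simps)
  finally show ?thesis .
qed

theorem lemma6p4:
  fixes d :: nat and \<epsilon> :: real and T0 :: complex
    and T :: "nat \<Rightarrow> 'n::finite list \<Rightarrow> complex"
  assumes "d \<ge> 1" and "\<epsilon> > 0"
    and "cmod T0 \<le> 1"
    and "\<And>j. j \<in> {1..d} \<Longrightarrow> frob (2*j) (T j) \<le> 1"
  defines "W \<equiv> cspan (\<Union>j\<in>{1..d}. \<Union>i\<in>{..<2*j}.
              Wsub (2*j) i (T j) (\<epsilon> / (d+1)^2) \<union> vconj ` Wsub (2*j) i (T j) (\<epsilon> / (d+1)^2))"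
  shows "real (cdim W) \<le> 8 * (d+1)^6 / \<epsilon>^2
     \<and> (\<forall>y :: 'n \<Rightarrow> complex. vnorm2 y \<le> 1 \<longrightarrow> cmod (polyf d T0 T y - polyf d T0 T (orth_proj W y)) \<le> \<epsilon>)"
proof -
  define \<delta> where "\<delta> = \<epsilon> / (real d + 1)^2"
  define U where "U = (\<Union>j\<in>{1..d}. \<Union>i\<in>{..<2*j}. Wsub (2*j) i (T j) \<delta> \<union> vconj ` Wsub (2*j) i (T j) \<delta>)"
  have \<delta>: "\<delta> > 0" using assms(2) by (simp add: \<delta>_def)
  have \<delta>_eq: "\<epsilon> / (d+1)^2 = \<delta>" by (simp add: \<delta>_def)
  have W: "W = cvec.span U" unfolding W_def U_def cspan_def \<delta>_eq ..
  show ?thesis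
  proof (intro conjI allI impI)
    have "real (cdim W) \<le> 2 * real d * (real d + 1) / \<delta>\<^sup>2"
      using cdim_span_Wsub_le[OF \<delta> assms(4)] by (simp add: W U_def cdim_def cspan_def)
    also have "\<dots> \<le> 2 * (real d + 1)^2 / \<delta>\<^sup>2"
      by (intro divide_right_mono) (auto simp: power2_eq_square)
    also have "\<dots> = 2 * (real d + 1)^6 / \<epsilon>\<^sup>2"
      using assms(2) by (simp add: \<delta>_def power_divide flip: power_mult power_add)
    finally show "real (cdim W) \<le> 8 * (d+1)^6 / \<epsilon>^2"
      by (simp add: add.commute)
  next
    fix y :: "'n \<Rightarrow> complex"
    assume y: "vnorm2 y \<le> 1"
    have "Wsub (2*j) i (T j) \<delta> \<union> vconj ` Wsub (2*j) i (T j) \<delta> \<subseteq> cvec.span U"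
      if "j \<in> {1..d}" "i < 2*j" for j i
      using that cvec.span_superset[of U] unfolding U_def by blast
    then have "cmod (polyf d T0 T y - polyf d T0 T (orth_proj W y)) \<le> real d * (real d + 1) * \<delta>"
      unfolding W by (rule norm_polyf_diff_orth_proj_le[OF \<delta> y])
    also have "\<dots> = \<epsilon> * (real d / (real d + 1))"
      by (simp add: \<delta>_def power2_eq_square)
    finally show "cmod (polyf d T0 T y - polyf d T0 T (orth_proj W y)) \<le> \<epsilon>"
      using assms(2) mult_left_le[of "real d / (real d + 1)" \<epsilon>] by simp
  qed
qed

end
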